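(* Let $X,Y$ be strings of length $n$, let $T$ be a partition tree for $X$ and $Y$, and let $L\ge0$ be an integer. Suppose that $T$ has maximum degree $\ell$ and height at most $h$. Then (a) $\mathrm{TD}^L(X,Y)\ge\mathrm{ED}(X,Y)$, and (b) if $\mathrm{ED}(X,Y)\le L$, then $\mathrm{TD}^L(X,Y)\le(2(\ell-1)h+1)\,\mathrm{ED}(X,Y)$.
   Context: $\mathrm{ED}$ is edit distance. For a string $Z$ and integers $i,j$, $Z[i..j)$ denotes $Z[\max(0,i)]\cdots Z[\min(j,|Z|)-1]$ (indices out of range are clipped). A partition tree for length-$n$ strings $X,Y$ is a rooted ordered tree (balanced, each internal node having at most $\ell$ children) with $n$ leaves numbered $0,\dots,n-1$ from left to right; the height is the maximum distance from the root to a leaf. For a node $v$ whose subtree contains exactly the leaves $i,\dots,j-1$, set $X_v=X[i..j)$ and, for a shift $s\in\mathbb Z$, $Y_{v,s}=Y[i+s..j+s)$. For every node $v$ and $s\in\{-L,\dots,L\}$ define recursively: if $v$ is a leaf, $\mathrm{TD}^L_{v,s}(X,Y)=\mathrm{ED}(X_v,Y_{v,s})$; if $v$ has children $v_0,\dots,v_{m-1}$, then $\mathrm{TD}^L_{v,s}(X,Y)=\sum_{i=0}^{m-1}\widetilde{\mathrm{TD}}^L_{v_i,s}(X,Y)$, where $\widetilde{\mathrm{TD}}^L_{w,s}(X,Y)=\min_{s'\in\{-L,\dots,L\}}\big(\mathrm{TD}^L_{w,s'}(X,Y)+2|s-s'|\big)$. Finally $\mathrm{TD}^L(X,Y):=\mathrm{TD}^L_{\mathrm{root},0}(X,Y)$.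 *)

theory Defs
  imports Main
begin

fun ED :: "'a list \<Rightarrow> 'a list \<Rightarrow> nat" where
  "ED [] ys = length ys"
| "ED xs [] = length xs"
| "ED (x # xs) (y # ys) =
     min (min (ED xs (y # ys) + 1) (ED (x # xs) ys + 1))
         (ED xs ys + (if x = y then 0 else 1))"

(* Z[i..j) with clipping of out-of-range indices *)
definition substr :: "'a list \<Rightarrow> int \<Rightarrow> int \<Rightarrow> 'a list" where
  "substr Z i j = take (nat (min j (int (length Z)) - max 0 i)) (drop (nat (max 0 i)) Z)"

(* rooted ordered trees; leaves are numbered left to right implicitly *)
datatype ptree = Leaf | Node "ptree list"

fun nleaves :: "ptree \<Rightarrow> nat" where
  "nleaves Leaf = 1"
| "nleaves (Node ts) = sum_list (map nleaves ts)"

fun height :: "ptree \<Rightarrow> nat" where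
  "height Leaf = 0"
| "height (Node ts) = 1 + fold max (map height ts) 0"

fun degree_le :: "nat \<Rightarrow> ptree \<Rightarrow> bool" where
  "degree_le l Leaf = True"
| "degree_le l (Node ts) = (ts \<noteq> [] \<and> length ts \<le> l \<and> (\<forall>t\<in>set ts. degree_le l t))"

fun wf_ptree :: "ptree \<Rightarrow> bool" where
  "wf_ptree Leaf = True"
| "wf_ptree (Node ts) = (ts \<noteq> [] \<and> (\<forall>t\<in>set ts. wf_ptree t))"

definition partition_tree :: "nat \<Rightarrow> ptree \<Rightarrow> bool" where
  "partition_tree n T \<longleftrightarrow> wf_ptree T \<and> nleaves T = n"

(* TD_node L X Y v i s = TD^L_{v,s}(X,Y), where v's leaves are numbered i, i+1, ...;
   TD_list handles the children list of a node, the first child starting at leaf i *)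
fun TD_node :: "int \<Rightarrow> 'a list \<Rightarrow> 'a list \<Rightarrow> ptree \<Rightarrow> int \<Rightarrow> int \<Rightarrow> nat"
and TD_list :: "int \<Rightarrow> 'a list \<Rightarrow> 'a list \<Rightarrow> ptree list \<Rightarrow> int \<Rightarrow> int \<Rightarrow> nat" where
  "TD_node L X Y Leaf i = (\<lambda>s. ED (substr X i (i + 1)) (substr Y (i + s) (i + 1 + s)))"
| "TD_node L X Y (Node ts) i = TD_list L X Y ts i"
| "TD_list L X Y [] i = (\<lambda>s. 0)"
| "TD_list L X Y (t # ts) i =
     (let f = TD_node L X Y t i; g = TD_list L X Y ts (i + int (nleaves t)) in
      (\<lambda>s. (MIN s'\<in>{-L..L}. f s' + 2 * nat \<bar>s - s'\<bar>) + g s))"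

definition TD :: "int \<Rightarrow> ptree \<Rightarrow> 'a list \<Rightarrow> 'a list \<Rightarrow> nat" where
  "TD L T X Y = TD_node L X Y T 0 0"

end

theory Submission
  imports Defs
begin

(* (a) By induction on the tree, TD_{v,s} >= ED(X_v, Y_{v,s}): shifting both ends of the
   Y-window by d changes ED by at most 2|d|, which the penalty 2|s - s'| pays for, and ED
   is subadditive under concatenation.

   (b) Fix an optimal alignment: a position map A from X into Y with per-position costs c
   summing to ED(X,Y), whose drift A p - p therefore stays within ED(X,Y) <= L. Evaluate
   every node at the drift of its first leaf. A leaf then costs at most its c, and a child
   other than the first pays, on top of its own cost, twice the change of drift since the
   parent's first leaf, i.e. at most twice the cost of the parent's range. Thus every unit
   of alignment cost is charged once at its leaf and at most 2(l-1) more times at each of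
   the at most h ancestors. *)

lemma ED_Nil_right [simp]: "ED xs [] = length xs"
  by (cases xs) auto

lemma length_le_ED_plus_length: "length xs \<le> ED xs ys + length ys"
  by (induction xs ys rule: ED.induct) auto

lemma ED_Cons_left_le: "ED (x # xs) ys \<le> ED xs ys + 1"
  by (cases ys) auto

lemma ED_Cons_right_le: "ED xs (y # ys) \<le> ED xs ys + 1"
  by (cases xs) auto

lemma ED_le_Cons_right: "ED xs ys \<le> ED xs (y # ys) + 1"
proof (induction xs ys rule: ED.induct)
  case (2 x xs)
  then show ?case using length_le_ED_plus_length[of "x # xs" "[y]"] by simp
next
  case (3 x xs y' ys)
  then show ?case using ED_Cons_left_le[of x xs "y' # ys"] by (auto simp: min_def)
qed simp

lemma ED_le_snoc_right: "ED xs ys \<le> ED xs (ys @ [y]) + 1"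
proof (induction xs ys rule: ED.induct)
  case (2 x xs)
  then show ?case using length_le_ED_plus_length[of "x # xs" "[y]"] by simp
next
  case (3 x xs y' ys)
  then show ?case
    using ED_Cons_left_le[of x xs "y' # ys"] ED_Cons_right_le[of "x # xs" y' ys]
    by (auto simp: min_def)
qed simp

lemma ED_append_right_le: "ED xs (zs @ ys) \<le> length zs + ED xs ys"
  by (induction zs) (auto intro: order_trans[OF ED_Cons_right_le])

lemma ED_append_left_le: "ED (zs @ xs) ys \<le> length zs + ED xs ys"
  by (induction zs) (auto intro: order_trans[OF ED_Cons_left_le])

lemma ED_append_le: "ED (xs @ xs') (ys @ ys') \<le> ED xs ys + ED xs' ys'"
proof (induction xs ys rule: ED.induct)
  case (1 ys)
  then show ?case using ED_append_right_le[of xs' ys ys'] by simp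
next
  case (2 x xs)
  then show ?case using ED_append_left_le[of "x # xs" xs' ys'] by simp
next
  case (3 x xs y ys)
  then show ?case by (auto simp: min_def)
qed

lemma ED_Cons_right_dist: "\<bar>int (ED xs (y # ys)) - int (ED xs ys)\<bar> \<le> 1"
  using ED_Cons_right_le[of xs y ys] ED_le_Cons_right[of xs ys y] by linarith

lemma ED_snoc_right_dist: "\<bar>int (ED xs (ys @ [y])) - int (ED xs ys)\<bar> \<le> 1"
  using ED_append_le[of xs "[]" ys "[y]"] ED_le_snoc_right[of xs ys y] by simp

lemma ED_window_start_dist:
  "P \<le> P' \<Longrightarrow> \<bar>int (ED u (map f [P'..<Q])) - int (ED u (map f [P..<Q]))\<bar> \<le> int (P' - P)"
proof (induction P' rule: dec_induct)
  case (step m)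
  have "\<bar>int (ED u (map f [Suc m..<Q])) - int (ED u (map f [m..<Q]))\<bar> \<le> 1"
    using ED_Cons_right_dist[of u "f m" "map f [Suc m..<Q]"]
    by (cases "m < Q") (simp_all add: upt_conv_Cons)
  with step show ?case by (simp add: Suc_diff_le)
qed simp

lemma ED_window_end_dist:
  "Q \<le> Q' \<Longrightarrow> \<bar>int (ED u (map f [P..<Q'])) - int (ED u (map f [P..<Q]))\<bar> \<le> int (Q' - Q)"
proof (induction Q' rule: dec_induct)
  case (step m)
  have "\<bar>int (ED u (map f [P..<Suc m])) - int (ED u (map f [P..<m]))\<bar> \<le> 1"
    using ED_snoc_right_dist[of u "map f [P..<m]" "f m"] by (cases "P \<le> m") simp_all
  with step show ?case by (simp add: Suc_diff_le)
qed simp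

lemma ED_window_dist:
  "\<bar>int (ED u (map f [P'..<Q'])) - int (ED u (map f [P..<Q]))\<bar>
     \<le> \<bar>int P' - int P\<bar> + \<bar>int Q' - int Q\<bar>"
proof -
  have "\<bar>int (ED u (map f [P'..<Q])) - int (ED u (map f [P..<Q]))\<bar> \<le> \<bar>int P' - int P\<bar>"
    using ED_window_start_dist[of P P' u f Q] ED_window_start_dist[of P' P u f Q]
    by (cases "P \<le> P'") auto
  moreover have "\<bar>int (ED u (map f [P'..<Q'])) - int (ED u (map f [P'..<Q]))\<bar> \<le> \<bar>int Q' - int Q\<bar>"
    using ED_window_end_dist[of Q Q' u f P'] ED_window_end_dist[of Q' Q u f P']
    by (cases "Q \<le> Q'") auto
  ultimately show ?thesis by linarith
qed

definition clip :: "nat \<Rightarrow> int \<Rightarrow> nat" where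
  "clip n a = nat (max 0 (min a (int n)))"

lemma clip_dist: "\<bar>int (clip n a) - int (clip n b)\<bar> \<le> \<bar>a - b\<bar>"
  by (auto simp: clip_def)

lemma take_upt_min: "take m [i..<n] = [i..<min n (i + m)]"
  by (cases "i + m \<le> n") (simp_all add: min_def)

lemma substr_conv_map_nth: "substr Z a b = map (nth Z) [clip (length Z) a..<clip (length Z) b]"
proof -
  have "substr Z a b
      = map (nth Z) (take (nat (min b (int (length Z)) - max 0 a)) [nat (max 0 a)..<length Z])"
    unfolding substr_def by (metis drop_map drop_upt take_map map_nth add_0)
  also have "\<dots> = map (nth Z) [clip (length Z) a..<clip (length Z) b]"
    unfolding take_upt_min clip_def
    by (cases "int (length Z) \<le> a"; cases "max 0 a \<le> min b (int (length Z))")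
      (auto simp flip: nat_add_distrib)
  finally show ?thesis .
qed

lemma ED_substr_shift_le:
  "ED u (substr Y (a + s) (b + s)) \<le> ED u (substr Y (a + s') (b + s')) + 2 * nat \<bar>s - s'\<bar>"
proof -
  have "\<bar>int (ED u (substr Y (a + s) (b + s))) - int (ED u (substr Y (a + s') (b + s')))\<bar>
      \<le> \<bar>a + s - (a + s')\<bar> + \<bar>b + s - (b + s')\<bar>"
    unfolding substr_conv_map_nth
    using ED_window_dist clip_dist by (meson add_mono order_trans)
  then show ?thesis by linarith
qed

lemma substr_append: "a \<le> b \<Longrightarrow> b \<le> c \<Longrightarrow> substr Z a b @ substr Z b c = substr Z a c"
proof -
  assume "a \<le> b" "b \<le> c"
  then have "clip (length Z) a \<le> clip (length Z) b" "clip (length Z) b \<le> clip (length Z) c"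
    by (auto simp: clip_def)
  then show ?thesis
    unfolding substr_conv_map_nth by (metis le_add_diff_inverse map_append upt_add_eq_append)
qed

lemma substr_empty [simp]: "substr Z a a = []"
  by (simp add: substr_def)

lemma substr_full [simp]: "substr Z 0 (int (length Z)) = Z"
  by (simp add: substr_conv_map_nth clip_def map_nth)

lemma substr_single:
  "0 \<le> a \<Longrightarrow> substr Z a (a + 1) = (if nat a < length Z then [Z ! nat a] else [])"
  by (auto simp: substr_conv_map_nth clip_def nat_add_distrib)

lemma ED_substr_le_Min_shift:
  assumes "finite S" "S \<noteq> {}" "\<And>s'. s' \<in> S \<Longrightarrow> ED u (substr Y (a + s') (b + s')) \<le> f s'"
  shows "ED u (substr Y (a + s) (b + s)) \<le> (MIN s'\<in>S. f s' + 2 * nat \<bar>s - s'\<bar>)"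
proof (subst Min_ge_iff, use assms in simp_all, intro ballI)
  fix s' assume "s' \<in> S"
  then show "ED u (substr Y (a + s) (b + s)) \<le> f s' + 2 * nat \<bar>s - s'\<bar>"
    using ED_substr_shift_le[of u Y a s b s'] assms(3)[of s'] by linarith
qed

lemma ED_le_TD:
  assumes "0 \<le> L"
  shows "ED (substr X i (i + int (nleaves t))) (substr Y (i + s) (i + int (nleaves t) + s))
           \<le> TD_node L X Y t i s"
    and "ED (substr X i (i + int (sum_list (map nleaves ts))))
           (substr Y (i + s) (i + int (sum_list (map nleaves ts)) + s)) \<le> TD_list L X Y ts i s"
  using assms
proof (induction L X Y t i and L X Y ts i arbitrary: s and s rule: TD_node_TD_list.induct)
  case (1 L X Y i)
  then show ?case by (simp add: add_ac)
next
  case (4 L X Y t ts i)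
  define m where "m = int (nleaves t)"
  define M where "M = int (sum_list (map nleaves ts))"
  have "m \<ge> 0" "M \<ge> 0" by (simp_all add: m_def M_def)
  then have split_X: "substr X i (i + (m + M)) = substr X i (i + m) @ substr X (i + m) (i + m + M)"
    and split_Y: "substr Y (i + s) (i + (m + M) + s)
        = substr Y (i + s) (i + m + s) @ substr Y (i + m + s) (i + m + M + s)"
    by (simp_all add: substr_append add.assoc add.left_commute)
  have "int (sum_list (map nleaves (t # ts))) = m + M"
    by (simp add: m_def M_def)
  moreover have "TD_list L X Y (t # ts) i s
      = (MIN s'\<in>{-L..L}. TD_node L X Y t i s' + 2 * nat \<bar>s - s'\<bar>) + TD_list L X Y ts (i + m) s"
    by (simp add: m_def Let_def)
  moreover have "ED (substr X i (i + m)) (substr Y (i + s) (i + m + s))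
      \<le> (MIN s'\<in>{-L..L}. TD_node L X Y t i s' + 2 * nat \<bar>s - s'\<bar>)"
    using 4 by (intro ED_substr_le_Min_shift) (auto simp: m_def)
  moreover have "ED (substr X (i + m) (i + m + M)) (substr Y (i + m + s) (i + m + M + s))
      \<le> TD_list L X Y ts (i + m) s"
    using "4.IH"(2)[OF refl, of s] "4.prems" by (simp add: m_def M_def add_ac)
  ultimately show ?case
    using ED_append_le[of "substr X i (i + m)" "substr X (i + m) (i + m + M)"
        "substr Y (i + s) (i + m + s)" "substr Y (i + m + s) (i + m + M + s)"]
    by (simp add: split_X split_Y)
qed simp_all

(* Position i of X is matched with position A i of Y; c i pays for a mismatch at i and
   for the gap between A i and A (Suc i). *)
definition is_alignment ::
    "'a list \<Rightarrow> 'a list \<Rightarrow> nat \<Rightarrow> (nat \<Rightarrow> int) \<Rightarrow> (nat \<Rightarrow> nat) \<Rightarrow> bool" where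
  "is_alignment X Y k A c \<longleftrightarrow> A 0 = 0 \<and> (\<forall>i. 0 \<le> A i) \<and> sum c {..<length X} \<le> k
     \<and> (\<forall>i<length X. \<bar>A (Suc i) - A i - 1\<bar> \<le> int (c i))
     \<and> (\<forall>i<length X. c i = 0 \<longrightarrow> nat (A i) < length Y \<and> X ! i = Y ! nat (A i))"

lemma is_alignment_Cons_left:
  "is_alignment xs ys k A c \<Longrightarrow> is_alignment (x # xs) ys (k + 1) (case_nat 0 A) (case_nat 1 c)"
  unfolding is_alignment_def
  by (auto simp: sum.lessThan_Suc_shift less_Suc_eq_0_disj
      simp del: sum.lessThan_Suc split: nat.split)

lemma is_alignment_Cons_right:
  "is_alignment (x # xs) ys k A c \<Longrightarrow>
   is_alignment (x # xs) (y # ys) (k + 1) ((\<lambda>i. A i + 1)(0 := 0)) (c(0 := c 0 + 1))"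
  unfolding is_alignment_def
  by (auto simp: sum.lessThan_Suc_shift less_Suc_eq_0_disj nat_add_distrib
      simp del: sum.lessThan_Suc split: nat.split)

lemma is_alignment_Cons_Cons:
  "is_alignment xs ys k A c \<Longrightarrow>
   is_alignment (x # xs) (y # ys) (k + (if x = y then 0 else 1)) (case_nat 0 (\<lambda>i. A i + 1))
     (case_nat (if x = y then 0 else 1) c)"
  unfolding is_alignment_def
  by (auto simp: sum.lessThan_Suc_shift less_Suc_eq_0_disj nat_add_distrib
      simp del: sum.lessThan_Suc split: nat.split)

lemma is_alignment_ED: "\<exists>A c. is_alignment X Y (ED X Y) A c"
proof (induction X Y rule: ED.induct)
  case (1 ys)
  have "is_alignment [] ys (length ys) (\<lambda>_. 0) (\<lambda>_. 0)"
    by (simp add: is_alignment_def)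
  then show ?case by auto
next
  case (2 x xs)
  have "is_alignment (x # xs) [] (length (x # xs)) (\<lambda>_. 0) (\<lambda>_. 1)"
    by (simp add: is_alignment_def)
  then show ?case by auto
next
  case (3 x xs y ys)
  from "3.IH" obtain A1 c1 A2 c2 A3 c3 where
    align1: "is_alignment xs (y # ys) (ED xs (y # ys)) A1 c1" and
    align2: "is_alignment (x # xs) ys (ED (x # xs) ys) A2 c2" and
    align3: "is_alignment xs ys (ED xs ys) A3 c3"
    by blast
  have "ED (x # xs) (y # ys) = ED xs (y # ys) + 1
      \<or> ED (x # xs) (y # ys) = ED (x # xs) ys + 1
      \<or> ED (x # xs) (y # ys) = ED xs ys + (if x = y then 0 else 1)"
    by (simp add: min_def)
  then consider "ED (x # xs) (y # ys) = ED xs (y # ys) + 1"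
    | "ED (x # xs) (y # ys) = ED (x # xs) ys + 1"
    | "ED (x # xs) (y # ys) = ED xs ys + (if x = y then 0 else 1)"
    by blast
  then show ?case
  proof cases
    case 1
    then show ?thesis using is_alignment_Cons_left[OF align1] by metis
  next
    case 2
    then show ?thesis using is_alignment_Cons_right[OF align2] by metis
  next
    case 3
    then show ?thesis using is_alignment_Cons_Cons[OF align3] by metis
  qed
qed

lemma is_alignment_shift_drift:
  assumes "is_alignment X Y k A c" "q \<le> p" "p \<le> length X"
  shows "\<bar>(A p - int p) - (A q - int q)\<bar> \<le> int (sum c {q..<p})"
  using assms(2,3)
proof (induction p rule: dec_induct)
  case (step p)
  then have "\<bar>A (Suc p) - A p - 1\<bar> \<le> int (c p)"
    using assms(1) by (simp add: is_alignment_def)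
  with step show ?case by simp
qed simp

lemma is_alignment_shift_le:
  assumes "is_alignment X Y k A c" "p \<le> length X"
  shows "\<bar>A p - int p\<bar> \<le> int k"
proof -
  have "\<bar>A p - int p\<bar> \<le> int (sum c {0..<p})"
    using is_alignment_shift_drift[OF assms(1) _ assms(2), of 0] assms(1)
    by (simp add: is_alignment_def)
  also have "sum c {0..<p} \<le> sum c {..<length X}"
    using assms(2) by (intro sum_mono2) auto
  also have "\<dots> \<le> k"
    using assms(1) by (simp add: is_alignment_def)
  finally show ?thesis by simp
qed

lemma height_lt_Node: "t \<in> set ts \<Longrightarrow> height t < height (Node ts)"
proof -
  assume "t \<in> set ts"
  then have "height t \<le> Max (set (0 # map height ts))" by simp
  then show ?thesis using Max.set_eq_fold[of 0 "map height ts"] by simp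
qed

lemma TD_Leaf_le_alignment_cost:
  assumes "is_alignment X Y k A c" "i < length X"
  shows "TD_node L X Y Leaf (int i) (A i - int i) \<le> c i"
proof -
  have "0 \<le> A i" using assms(1) by (simp add: is_alignment_def)
  have "TD_node L X Y Leaf (int i) (A i - int i)
      = ED (substr X (int i) (int i + 1)) (substr Y (A i) (A i + 1))"
    by (simp add: add.commute)
  also have "\<dots> = ED [X ! i] (if nat (A i) < length Y then [Y ! nat (A i)] else [])"
    using \<open>0 \<le> A i\<close> assms(2) by (simp add: substr_single)
  also have "\<dots> \<le> c i"
  proof (cases "c i = 0")
    case True
    with assms have "nat (A i) < length Y \<and> X ! i = Y ! nat (A i)"
      unfolding is_alignment_def by blast
    then show ?thesis by simp
  next
    case False
    then show ?thesis by (simp add: min_def)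
  qed
  finally show ?thesis .
qed

lemma Min_TD_node_shift_le:
  assumes align: "is_alignment X Y k A c" and "int k \<le> L" and "i0 \<le> i" "i \<le> length X"
  shows "(MIN s\<in>{-L..L}. TD_node L X Y t (int i) s + 2 * nat \<bar>(A i0 - int i0) - s\<bar>)
    \<le> TD_node L X Y t (int i) (A i - int i) + 2 * sum c {i0..<i}"
proof -
  have "\<bar>A i - int i\<bar> \<le> L"
    using is_alignment_shift_le[OF align \<open>i \<le> length X\<close>] \<open>int k \<le> L\<close> by simp
  then have "(MIN s\<in>{-L..L}. TD_node L X Y t (int i) s + 2 * nat \<bar>(A i0 - int i0) - s\<bar>)
      \<le> TD_node L X Y t (int i) (A i - int i) + 2 * nat \<bar>(A i0 - int i0) - (A i - int i)\<bar>"
    by (intro Min_le finite_imageI imageI) auto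
  moreover have "nat \<bar>(A i0 - int i0) - (A i - int i)\<bar> \<le> sum c {i0..<i}"
    unfolding nat_le_iff using is_alignment_shift_drift[OF align \<open>i0 \<le> i\<close> \<open>i \<le> length X\<close>]
    by (simp add: abs_minus_commute)
  ultimately show ?thesis by linarith
qed

lemma TD_list_le_alignment_cost:
  assumes align: "is_alignment X Y k A c" and "int k \<le> L"
    and children: "\<And>t j. t \<in> set ts \<Longrightarrow> j + nleaves t \<le> length X \<Longrightarrow>
      TD_node L X Y t (int j) (A j - int j) \<le> a * sum c {j..<j + nleaves t}"
    and "i0 \<le> i" "i + sum_list (map nleaves ts) \<le> length X"
  shows "TD_list L X Y ts (int i) (A i0 - int i0)
    \<le> a * sum c {i..<i + sum_list (map nleaves ts)}
      + 2 * length ts * sum c {i0..<i + sum_list (map nleaves ts)}"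
  using children assms(4,5)
proof (induction ts arbitrary: i)
  case (Cons t ts)
  define e where "e = i + nleaves t + sum_list (map nleaves ts)"
  have "i + nleaves t \<le> length X" "e \<le> length X"
    using Cons.prems(3) by (simp_all add: e_def add.assoc)
  have "(MIN s\<in>{-L..L}. TD_node L X Y t (int i) s + 2 * nat \<bar>(A i0 - int i0) - s\<bar>)
      \<le> TD_node L X Y t (int i) (A i - int i) + 2 * sum c {i0..<i}"
    using Min_TD_node_shift_le[OF align \<open>int k \<le> L\<close> \<open>i0 \<le> i\<close>] \<open>i + nleaves t \<le> length X\<close>
    by simp
  also have "\<dots> \<le> a * sum c {i..<i + nleaves t} + 2 * sum c {i0..<i}"
    using Cons.prems(1)[of t i] \<open>i + nleaves t \<le> length X\<close> by simp
  also have "\<dots> \<le> a * sum c {i..<i + nleaves t} + 2 * sum c {i0..<e}"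
    by (intro add_left_mono mult_left_mono sum_mono2) (auto simp: e_def)
  finally have first: "(MIN s\<in>{-L..L}. TD_node L X Y t (int i) s + 2 * nat \<bar>(A i0 - int i0) - s\<bar>)
      \<le> a * sum c {i..<i + nleaves t} + 2 * sum c {i0..<e}" .
  have rest: "TD_list L X Y ts (int (i + nleaves t)) (A i0 - int i0)
      \<le> a * sum c {i + nleaves t..<e} + 2 * length ts * sum c {i0..<e}"
    using Cons.IH[of "i + nleaves t"] Cons.prems by (simp add: e_def add.assoc)
  have "TD_list L X Y (t # ts) (int i) (A i0 - int i0)
      = (MIN s\<in>{-L..L}. TD_node L X Y t (int i) s + 2 * nat \<bar>(A i0 - int i0) - s\<bar>)
        + TD_list L X Y ts (int (i + nleaves t)) (A i0 - int i0)"
    by (simp add: Let_def)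
  also have "\<dots> \<le> a * (sum c {i..<i + nleaves t} + sum c {i + nleaves t..<e})
      + 2 * length (t # ts) * sum c {i0..<e}"
    using add_mono[OF first rest] by (simp add: algebra_simps)
  also have "sum c {i..<i + nleaves t} + sum c {i + nleaves t..<e} = sum c {i..<e}"
    by (simp add: e_def sum.atLeastLessThan_concat)
  finally show ?case by (simp add: e_def add.assoc)
qed simp

lemma TD_Node_le_alignment_cost:
  assumes align: "is_alignment X Y k A c" and "int k \<le> L"
    and children: "\<And>t j. t \<in> set ts \<Longrightarrow> j + nleaves t \<le> length X \<Longrightarrow>
      TD_node L X Y t (int j) (A j - int j) \<le> a * sum c {j..<j + nleaves t}"
    and "length ts \<le> l" and "i + nleaves (Node ts) \<le> length X"
  shows "TD_node L X Y (Node ts) (int i) (A i - int i)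
    \<le> (a + 2 * (l - 1)) * sum c {i..<i + nleaves (Node ts)}"
proof (cases ts)
  case (Cons t us)
  define e where "e = i + nleaves t + sum_list (map nleaves us)"
  have "i + nleaves t \<le> length X" "e \<le> length X"
    using assms(5) by (simp_all add: Cons e_def add.assoc)
  have "(MIN s\<in>{-L..L}. TD_node L X Y t (int i) s + 2 * nat \<bar>(A i - int i) - s\<bar>)
      \<le> TD_node L X Y t (int i) (A i - int i)"
    using Min_TD_node_shift_le[OF align \<open>int k \<le> L\<close> order_refl] \<open>i + nleaves t \<le> length X\<close>
    by simp
  also have "\<dots> \<le> a * sum c {i..<i + nleaves t}"
    using children[of t i] \<open>i + nleaves t \<le> length X\<close> by (simp add: Cons)
  finally have first: "(MIN s\<in>{-L..L}. TD_node L X Y t (int i) s + 2 * nat \<bar>(A i - int i) - s\<bar>)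
      \<le> a * sum c {i..<i + nleaves t}" .
  have "TD_list L X Y us (int (i + nleaves t)) (A i - int i)
      \<le> a * sum c {i + nleaves t..<e} + 2 * length us * sum c {i..<e}"
    using TD_list_le_alignment_cost[OF align \<open>int k \<le> L\<close> _ le_add1, of us a] children
      \<open>e \<le> length X\<close> by (simp add: Cons e_def)
  also have "\<dots> \<le> a * sum c {i + nleaves t..<e} + 2 * (l - 1) * sum c {i..<e}"
    using \<open>length ts \<le> l\<close> by (intro add_left_mono mult_right_mono) (simp_all add: Cons)
  finally have rest: "TD_list L X Y us (int (i + nleaves t)) (A i - int i)
      \<le> a * sum c {i + nleaves t..<e} + 2 * (l - 1) * sum c {i..<e}" .
  have "TD_node L X Y (Node ts) (int i) (A i - int i)
      = (MIN s\<in>{-L..L}. TD_node L X Y t (int i) s + 2 * nat \<bar>(A i - int i) - s\<bar>)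
        + TD_list L X Y us (int (i + nleaves t)) (A i - int i)"
    by (simp add: Cons Let_def)
  also have "\<dots> \<le> a * (sum c {i..<i + nleaves t} + sum c {i + nleaves t..<e})
      + 2 * (l - 1) * sum c {i..<e}"
    using add_mono[OF first rest] by (simp add: add_mult_distrib2)
  also have "\<dots> = (a + 2 * (l - 1)) * sum c {i..<e}"
    by (simp add: e_def sum.atLeastLessThan_concat add_mult_distrib)
  finally show ?thesis by (simp add: Cons e_def add.assoc)
qed simp

lemma TD_le_alignment_cost:
  assumes align: "is_alignment X Y k A c" and "int k \<le> L"
  shows "degree_le l t \<Longrightarrow> i + nleaves t \<le> length X \<Longrightarrow>
    TD_node L X Y t (int i) (A i - int i)
      \<le> (1 + 2 * (l - 1) * height t) * sum c {i..<i + nleaves t}"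
proof (induction t arbitrary: i)
  case Leaf
  then show ?case using TD_Leaf_le_alignment_cost[OF align] by simp
next
  case (Node ts)
  define h where "h = height (Node ts)"
  obtain h' where "h = Suc h'"
    by (cases h) (simp_all add: h_def)
  have children: "TD_node L X Y t' (int j) (A j - int j)
      \<le> (1 + 2 * (l - 1) * h') * sum c {j..<j + nleaves t'}"
    if "t' \<in> set ts" "j + nleaves t' \<le> length X" for t' j
  proof -
    have "degree_le l t'" using Node.prems(1) that(1) by simp
    with Node.IH[OF that(1) _ that(2)]
    have "TD_node L X Y t' (int j) (A j - int j)
        \<le> (1 + 2 * (l - 1) * height t') * sum c {j..<j + nleaves t'}" .
    also have "\<dots> \<le> (1 + 2 * (l - 1) * h') * sum c {j..<j + nleaves t'}"
      using height_lt_Node[OF \<open>t' \<in> set ts\<close>] \<open>h = Suc h'\<close>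
      by (intro mult_right_mono) (simp_all add: h_def)
    finally show ?thesis .
  qed
  have "length ts \<le> l" using Node.prems(1) by simp
  from TD_Node_le_alignment_cost[OF align \<open>int k \<le> L\<close> children this Node.prems(2)]
  have "TD_node L X Y (Node ts) (int i) (A i - int i)
      \<le> (1 + 2 * (l - 1) * h' + 2 * (l - 1)) * sum c {i..<i + nleaves (Node ts)}" .
  also have "1 + 2 * (l - 1) * h' + 2 * (l - 1) = 1 + 2 * (l - 1) * height (Node ts)"
    using \<open>h = Suc h'\<close> by (simp add: h_def mult_Suc_right)
  finally show ?case .
qed

theorem lemma4p3:
  fixes X Y :: "'a list" and T :: ptree and n l h :: nat and L :: int
  assumes "length X = n" and "length Y = n"
    and "partition_tree n T"
    and "1 \<le> l" and "degree_le l T"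
    and "height T \<le> h"
    and "0 \<le> L"
  shows "ED X Y \<le> TD L T X Y \<and>
         (int (ED X Y) \<le> L \<longrightarrow>
          int (TD L T X Y) \<le> (2 * (int l - 1) * int h + 1) * int (ED X Y))"
proof
  have leaves: "nleaves T = n"
    using assms(3) by (simp add: partition_tree_def)
  show "ED X Y \<le> TD L T X Y"
    using ED_le_TD(1)[OF \<open>0 \<le> L\<close>, of X 0 T Y 0] substr_full[of X] substr_full[of Y]
      assms(1,2) leaves
    by (simp add: TD_def)
  show "int (ED X Y) \<le> L \<longrightarrow> int (TD L T X Y) \<le> (2 * (int l - 1) * int h + 1) * int (ED X Y)"
  proof
    assume "int (ED X Y) \<le> L"
    obtain A c where align: "is_alignment X Y (ED X Y) A c"
      using is_alignment_ED by blast
    then have "A 0 = 0" and cost: "sum c {..<n} \<le> ED X Y"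
      using assms(1) by (simp_all add: is_alignment_def)
    have "TD L T X Y \<le> (1 + 2 * (l - 1) * height T) * sum c {..<n}"
      using TD_le_alignment_cost[OF align \<open>int (ED X Y) \<le> L\<close> \<open>degree_le l T\<close>, of 0]
        \<open>A 0 = 0\<close> leaves assms(1) by (simp add: TD_def atLeast0LessThan)
    also have "\<dots> \<le> (1 + 2 * (l - 1) * h) * ED X Y"
      using cost \<open>height T \<le> h\<close> by (intro mult_mono) auto
    finally have "int (TD L T X Y) \<le> int ((1 + 2 * (l - 1) * h) * ED X Y)"
      by (simp only: of_nat_le_iff)
    also have "\<dots> = (2 * (int l - 1) * int h + 1) * int (ED X Y)"
      using \<open>1 \<le> l\<close> by (simp add: of_nat_diff) (simp add: algebra_simps)
    finally show "int (TD L T X Y) \<le> (2 * (int l - 1) * int h + 1) * int (ED X Y)" .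
  qed
qed

end
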